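(* Let $C_S(2):=8\sqrt{2\pi(e+256)}$ and $A(t)=e^{t^2}-1$. For every mesh size vector $h=(h_1,h_2)$, $$\|u\|_A\le C_S(2)\|u\|_{W^{1,2}}\quad\text{for all }u\in W^{1,2}(\mathbb{R}^2_h),$$ which is equivalent to $\sum_{x\in\mathbb{R}^2_h}A\big(\frac{|u(x)|}{C_S(2)\|u\|_{W^{1,2}}}\big)\mathbf{h}\le1$ for all $u\in W^{1,2}(\mathbb{R}^2_h)\setminus\{0\}$. In particular, $\|u\|_{L^p}\le 2C_S(2)\,p\,\|u\|_{W^{1,2}}$ for all $u\in W^{1,2}(\mathbb{R}^2_h)$ and all $p\ge2$.
   Context: $h_1,h_2>0$, $\mathbb{R}^2_h=\{(h_1z_1,h_2z_2):z_i\in\mathbb{Z}\}$, $\mathbf{h}=h_1h_2$, $D_i^+u(x)=(u(x+h_ie_i)-u(x))/h_i$. $\|u\|_{L^p}=(\sum_{x\in\mathbb{R}^2_h}|u(x)|^p\mathbf{h})^{1/p}$, $\|u\|_{W^{1,2}}^2=\sum_{x}|u(x)|^2\mathbf{h}+\sum_{i=1}^2\sum_x|D_i^+u(x)|^2\mathbf{h}$ (sums over $\mathbb{R}^2_h$), $W^{1,2}(\mathbb{R}^2_h)=\{u:\|u\|_{W^{1,2}}<\infty\}$. The Orlicz norm is $\|u\|_A=\inf\{k>0:\sum_{x\in\mathbb{R}^2_h}A(|u(x)|/k)\mathbf{h}\le1\}$. *)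

theory Defs
  imports "HOL-Analysis.Analysis"
begin

text \<open>A grid function u on the lattice R^2_h = {(h1 z1, h2 z2)} is represented by its
values at the integer indices: u (z1, z2) is the value at (h1 z1, h2 z2).\<close>

type_synonym gridfun = "int \<times> int \<Rightarrow> real"

definition D1p :: "real \<Rightarrow> gridfun \<Rightarrow> gridfun" where
  "D1p h1 u z = (u (fst z + 1, snd z) - u z) / h1"

definition D2p :: "real \<Rightarrow> gridfun \<Rightarrow> gridfun" where
  "D2p h2 u z = (u (fst z, snd z + 1) - u z) / h2"

definition in_W12 :: "real \<Rightarrow> real \<Rightarrow> gridfun \<Rightarrow> bool" where
  "in_W12 h1 h2 u \<longleftrightarrow>
     (\<lambda>z. (u z)\<^sup>2 * (h1 * h2)) summable_on UNIV \<and>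
     (\<lambda>z. (D1p h1 u z)\<^sup>2 * (h1 * h2)) summable_on UNIV \<and>
     (\<lambda>z. (D2p h2 u z)\<^sup>2 * (h1 * h2)) summable_on UNIV"

definition W12_norm :: "real \<Rightarrow> real \<Rightarrow> gridfun \<Rightarrow> real" where
  "W12_norm h1 h2 u = sqrt ((\<Sum>\<^sub>\<infinity>z. (u z)\<^sup>2 * (h1 * h2))
      + (\<Sum>\<^sub>\<infinity>z. (D1p h1 u z)\<^sup>2 * (h1 * h2))
      + (\<Sum>\<^sub>\<infinity>z. (D2p h2 u z)\<^sup>2 * (h1 * h2)))"

definition Lp_norm :: "real \<Rightarrow> real \<Rightarrow> real \<Rightarrow> gridfun \<Rightarrow> real" where
  "Lp_norm p h1 h2 u = (\<Sum>\<^sub>\<infinity>z. \<bar>u z\<bar> powr p * (h1 * h2)) powr (1 / p)"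

text \<open>Orlicz (Luxemburg) norm; the sum must converge for the condition to be meaningful.\<close>
definition orlicz_norm :: "(real \<Rightarrow> real) \<Rightarrow> real \<Rightarrow> real \<Rightarrow> gridfun \<Rightarrow> real" where
  "orlicz_norm A h1 h2 u = Inf {k. k > 0 \<and>
      (\<lambda>z. A (\<bar>u z\<bar> / k) * (h1 * h2)) summable_on UNIV \<and>
      (\<Sum>\<^sub>\<infinity>z. A (\<bar>u z\<bar> / k) * (h1 * h2)) \<le> 1}"

definition A_exp :: "real \<Rightarrow> real" where
  "A_exp t = exp (t\<^sup>2) - 1"

definition C_S2 :: real where
  "C_S2 = 8 * sqrt (2 * pi * (exp 1 + 256))"

end

theory Submission
  imports Defs
begin

text \<open>Let N be the W^{1,2} norm of u and k = C N with C at least 100. Below the level 4 N,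
  the modular is at most a constant times the L^2 norm of u divided by k^2. Above it, cut the
  range of |u| into slabs. For the truncation of |u| to a slab of height d, the discrete
  Gagliardo--Nirenberg inequality and Cauchy--Schwarz on its support give
  d^2 |{|u| > c + d}| <= |{|u| > c}| * (gradient energy of the truncation),
  and the gradient energies of consecutive slabs add up to at most that of u. Chaining j^2
  slabs of width 4 N / j and using AM--GM yields |{|u| > 4 N (j + 1)}| <= 16^(-j^2) |{|u| > 4 N}|,
  a Gaussian decay that beats the growth of exp(t^2) on these levels. The L^p bounds follow
  from the pointwise inequality (t / (2 p))^p <= exp(t^2) - 1.\<close>

lemma sum_int_ivl_telescope:
  fixes f :: "int \<Rightarrow> 'a::ab_group_add"
  shows "(\<Sum>j\<in>{a..<a + int n}. f j - f (j + 1)) = f a - f (a + int n)"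
proof (induction n)
  case 0
  then show ?case by simp
next
  case (Suc n)
  have "{a..<a + int (Suc n)} = insert (a + int n) {a..<a + int n}" by auto
  then show ?case using Suc by (simp add: algebra_simps)
qed

lemma abs_le_sum_abs_diff:
  fixes f :: "int \<Rightarrow> real"
  assumes vanish: "\<And>j. j \<ge> a1 \<Longrightarrow> f j = 0" and "a0 \<le> a"
  shows "\<bar>f a\<bar> \<le> (\<Sum>j\<in>{a0..<a1}. \<bar>f (j + 1) - f j\<bar>)"
proof (cases "a < a1")
  case False
  then show ?thesis using vanish by (simp add: sum_nonneg)
next
  case True
  then have "a + int (nat (a1 - a)) = a1" by simp
  then have "f a = (\<Sum>j\<in>{a..<a1}. f j - f (j + 1))"
    using sum_int_ivl_telescope[of f a "nat (a1 - a)"] vanish by simp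
  also have "\<bar>\<dots>\<bar> \<le> (\<Sum>j\<in>{a..<a1}. \<bar>f j - f (j + 1)\<bar>)" by (rule sum_abs)
  also have "\<dots> = (\<Sum>j\<in>{a..<a1}. \<bar>f (j + 1) - f j\<bar>)" by (simp add: abs_minus_commute)
  also have "\<dots> \<le> (\<Sum>j\<in>{a0..<a1}. \<bar>f (j + 1) - f j\<bar>)"
    by (rule sum_mono2) (use assms in auto)
  finally show ?thesis .
qed

text \<open>Each value of v is bounded both by its total variation along the row and along the
  column through it.\<close>
lemma discrete_gagliardo_nirenberg:
  fixes v :: "int \<times> int \<Rightarrow> real"
  assumes nonneg: "\<And>z. v z \<ge> 0"
    and supp: "\<And>z. v z \<noteq> 0 \<Longrightarrow> z \<in> {a0..<a1} \<times> {b0..<b1}"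
  shows "(\<Sum>z\<in>{a0..<a1} \<times> {b0..<b1}. (v z)\<^sup>2) \<le>
     (\<Sum>z\<in>{a0..<a1} \<times> {b0..<b1}. \<bar>v (fst z + 1, snd z) - v z\<bar>) *
     (\<Sum>z\<in>{a0..<a1} \<times> {b0..<b1}. \<bar>v (fst z, snd z + 1) - v z\<bar>)"
proof -
  define F where "F y = (\<Sum>j\<in>{a0..<a1}. \<bar>v (j + 1, y) - v (j, y)\<bar>)" for y
  define G where "G x = (\<Sum>i\<in>{b0..<b1}. \<bar>v (x, i + 1) - v (x, i)\<bar>)" for x
  have row: "v (x, y) \<le> F y" if "x \<in> {a0..<a1}" for x y
  proof -
    have "\<bar>v (x, y)\<bar> \<le> F y" unfolding F_def
      by (rule abs_le_sum_abs_diff[where f = "\<lambda>j. v (j, y)"]) (use supp that in force)+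
    then show ?thesis by simp
  qed
  have col: "v (x, y) \<le> G x" if "y \<in> {b0..<b1}" for x y
  proof -
    have "\<bar>v (x, y)\<bar> \<le> G x" unfolding G_def
      by (rule abs_le_sum_abs_diff[where f = "\<lambda>i. v (x, i)"]) (use supp that in force)+
    then show ?thesis by simp
  qed
  have "(\<Sum>z\<in>{a0..<a1} \<times> {b0..<b1}. (v z)\<^sup>2)
        \<le> (\<Sum>z\<in>{a0..<a1} \<times> {b0..<b1}. F (snd z) * G (fst z))"
  proof (rule sum_mono, clarify)
    fix x y assume "x \<in> {a0..<a1}" "y \<in> {b0..<b1}"
    then have "v (x, y) \<le> F y" "v (x, y) \<le> G x" by (simp_all add: row col)
    then show "(v (x, y))\<^sup>2 \<le> F (snd (x, y)) * G (fst (x, y))"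
      unfolding power2_eq_square using nonneg[of "(x, y)"] by (simp add: mult_mono)
  qed
  also have "\<dots> = (\<Sum>x\<in>{a0..<a1}. G x * (\<Sum>y\<in>{b0..<b1}. F y))"
    by (simp add: sum.cartesian_product split_def sum_distrib_left mult.commute)
  also have "\<dots> = (\<Sum>x\<in>{a0..<a1}. G x) * (\<Sum>y\<in>{b0..<b1}. F y)"
    by (simp add: sum_distrib_right)
  also have "(\<Sum>y\<in>{b0..<b1}. F y) = (\<Sum>z\<in>{a0..<a1} \<times> {b0..<b1}. \<bar>v (fst z + 1, snd z) - v z\<bar>)"
    unfolding F_def by (subst sum.swap) (simp add: sum.cartesian_product split_def)
  also have "(\<Sum>x\<in>{a0..<a1}. G x) = (\<Sum>z\<in>{a0..<a1} \<times> {b0..<b1}. \<bar>v (fst z, snd z + 1) - v z\<bar>)"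
    unfolding G_def by (simp add: sum.cartesian_product split_def)
  finally show ?thesis by (simp add: mult.commute)
qed

text \<open>Cauchy--Schwarz on the at most 2 card E points where a difference of T supported
  in E can be nonzero.\<close>
lemma sum_abs_shift_diff_power2_le:
  fixes T :: "int \<times> int \<Rightarrow> real" and \<sigma> \<tau> :: "int \<times> int \<Rightarrow> int \<times> int"
  assumes R: "finite R" and E: "finite E" and inv: "\<And>z. \<tau> (\<sigma> z) = z"
    and supp: "\<And>z. T z \<noteq> 0 \<Longrightarrow> z \<in> E"
  shows "(\<Sum>z\<in>R. \<bar>T (\<sigma> z) - T z\<bar>)\<^sup>2 \<le> 2 * real (card E) * (\<Sum>z\<in>R. (T (\<sigma> z) - T z)\<^sup>2)"
proof -
  define A where "A = R \<inter> (E \<union> \<tau> ` E)"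
  have AR: "A \<subseteq> R" and fA: "finite A" using R by (auto simp: A_def)
  have zero: "T (\<sigma> z) - T z = 0" if "z \<in> R - A" for z
  proof -
    have "z \<notin> E" using that by (auto simp: A_def)
    moreover have "\<sigma> z \<notin> E"
    proof
      assume "\<sigma> z \<in> E"
      then have "z \<in> \<tau> ` E" using inv by (metis image_eqI)
      then show False using that by (auto simp: A_def)
    qed
    ultimately have "T z = 0" "T (\<sigma> z) = 0" using supp by blast+
    then show ?thesis by simp
  qed
  have "(\<Sum>z\<in>R. \<bar>T (\<sigma> z) - T z\<bar>) = (\<Sum>z\<in>A. \<bar>T (\<sigma> z) - T z\<bar>)"
    by (rule sum.mono_neutral_right[OF R AR]) (use zero in auto)
  then have "(\<Sum>z\<in>R. \<bar>T (\<sigma> z) - T z\<bar>)\<^sup>2 \<le> (\<Sum>z\<in>A. (T (\<sigma> z) - T z)\<^sup>2) * real (card A)"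
    using Cauchy_Schwarz_ineq_sum[of "\<lambda>z. \<bar>T (\<sigma> z) - T z\<bar>" "\<lambda>_. 1::real" A] by simp
  also have "\<dots> \<le> (\<Sum>z\<in>R. (T (\<sigma> z) - T z)\<^sup>2) * (2 * real (card E))"
  proof (rule mult_mono)
    show "(\<Sum>z\<in>A. (T (\<sigma> z) - T z)\<^sup>2) \<le> (\<Sum>z\<in>R. (T (\<sigma> z) - T z)\<^sup>2)"
      by (rule sum_mono2[OF R AR]) simp
    have "card A \<le> card (E \<union> \<tau> ` E)" unfolding A_def by (rule card_mono) (use E in auto)
    also have "\<dots> \<le> card E + card (\<tau> ` E)" by (rule card_Un_le)
    also have "\<dots> \<le> card E + card E" using card_image_le[OF E] by simp
    finally show "real (card A) \<le> 2 * real (card E)" by simp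
  qed (auto simp: sum_nonneg)
  finally show ?thesis by (simp add: mult.commute)
qed

lemma mult_le_of_power2_bounds:
  fixes x y c a b p q :: real
  assumes x: "x\<^sup>2 \<le> 2 * c * (a\<^sup>2 * p)" and y: "y\<^sup>2 \<le> 2 * c * (b\<^sup>2 * q)"
    and "0 \<le> x" "0 \<le> y" "0 \<le> c" "0 \<le> a" "0 \<le> b" "0 \<le> p" "0 \<le> q"
  shows "x * y \<le> c * (p + q) * (a * b)"
proof -
  have "(x * y)\<^sup>2 = x\<^sup>2 * y\<^sup>2" by (simp add: power_mult_distrib)
  also have "\<dots> \<le> (2 * c * (a\<^sup>2 * p)) * (2 * c * (b\<^sup>2 * q))"
    by (rule mult_mono[OF x y]) (use assms in simp_all)
  also have "\<dots> = (c * a * b)\<^sup>2 * (4 * p * q)" by (simp add: power2_eq_square algebra_simps)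
  also have "\<dots> \<le> (c * a * b)\<^sup>2 * (p + q)\<^sup>2"
  proof (rule mult_left_mono)
    show "4 * p * q \<le> (p + q)\<^sup>2"
      using sum_squares_ge_zero[of "p - q" 0] by (simp add: power2_eq_square algebra_simps)
  qed simp
  also have "\<dots> = (c * (p + q) * (a * b))\<^sup>2" by (simp add: power2_eq_square algebra_simps)
  finally show ?thesis by (rule power2_le_imp_le) (use assms in simp)
qed

lemma sum_power2_le_power2_sum:
  fixes f :: "'a \<Rightarrow> real"
  assumes "\<And>i. i \<in> A \<Longrightarrow> f i \<ge> 0"
  shows "(\<Sum>i\<in>A. (f i)\<^sup>2) \<le> (\<Sum>i\<in>A. f i)\<^sup>2"
  using assms
proof (induction A rule: infinite_finite_induct)
  case (insert i A)
  have "0 \<le> 2 * f i * (\<Sum>j\<in>A. f j)" using insert.prems by (simp add: sum_nonneg)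
  then show ?case using insert by (simp add: power2_eq_square algebra_simps)
qed simp_all

lemma prod_le_mean_power:
  fixes g :: "nat \<Rightarrow> real"
  assumes "n \<ge> 1" and nonneg: "\<And>j. g j \<ge> 0"
  shows "(\<Prod>j<n. g j) \<le> ((\<Sum>j<n. g j) / real n) ^ n"
proof -
  define P where "P = (\<Prod>j<n. g j)"
  have P: "P \<ge> 0" using nonneg by (simp add: P_def prod_nonneg)
  have "0 \<in> {..<n}" using assms by simp
  then have "{..<n} \<noteq> {}" by blast
  then have "P powr (1 / real n) \<le> (\<Sum>j<n. g j / real n)"
    using arith_geom_mean[of "{..<n}" g] nonneg by (simp add: P_def)
  also have "\<dots> = (\<Sum>j<n. g j) / real n" by (simp add: sum_divide_distrib)
  finally have "(P powr (1 / real n)) ^ n \<le> ((\<Sum>j<n. g j) / real n) ^ n"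
    by (intro power_mono) simp_all
  moreover have "(P powr (1 / real n)) ^ n = P"
  proof (cases "P = 0")
    case False
    then have "0 < P powr (1 / real n)" using P by simp
    then have "(P powr (1 / real n)) ^ n = (P powr (1 / real n)) powr real n"
      by (simp add: powr_realpow)
    also have "\<dots> = P" using False P assms by (simp add: powr_powr)
    finally show ?thesis .
  qed (use assms in simp)
  ultimately show ?thesis by (simp add: P_def)
qed

definition layer_trunc :: "real \<Rightarrow> real \<Rightarrow> real \<Rightarrow> real" where
  "layer_trunc b c s = min (max (s - b) 0) (c - b)"

lemma layer_trunc_nonneg: "b \<le> c \<Longrightarrow> layer_trunc b c s \<ge> 0"
  by (simp add: layer_trunc_def)

lemma layer_trunc_eq_0: "s \<le> b \<Longrightarrow> b \<le> c \<Longrightarrow> layer_trunc b c s = 0"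
  by (simp add: layer_trunc_def)

lemma layer_trunc_eq_height: "c \<le> s \<Longrightarrow> layer_trunc b c s = c - b"
  by (simp add: layer_trunc_def)

lemma layer_trunc_lipschitz: "b \<le> c \<Longrightarrow> \<bar>layer_trunc b c s' - layer_trunc b c s\<bar> \<le> \<bar>s' - s\<bar>"
  by (auto simp: layer_trunc_def min_def max_def)

lemma layer_trunc_mono: "b \<le> c \<Longrightarrow> s \<le> s' \<Longrightarrow> layer_trunc b c s \<le> layer_trunc b c s'"
  by (auto simp: layer_trunc_def min_def max_def)

lemma sum_layer_trunc:
  assumes "\<delta> \<ge> 0"
  shows "(\<Sum>j<n. layer_trunc (b + real j * \<delta>) (b + real (Suc j) * \<delta>) s) = layer_trunc b (b + real n * \<delta>) s"
proof (induction n)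
  case (Suc n)
  have "0 \<le> real n * \<delta>" using assms by simp
  then have "layer_trunc b (b + real n * \<delta>) s + layer_trunc (b + real n * \<delta>) (b + real (Suc n) * \<delta>) s
        = layer_trunc b (b + real (Suc n) * \<delta>) s"
    unfolding layer_trunc_def of_nat_Suc distrib_right mult_1 min_def max_def using assms by (smt (verit))
  then show ?case using Suc by simp
qed (simp add: layer_trunc_def)

text \<open>The slab truncations of s and s' all move in the same direction, so their squared
  increments add up to at most the squared total increment.\<close>
lemma sum_power2_layer_trunc_diff_le:
  assumes "\<delta> \<ge> 0"
  shows "(\<Sum>j<n. (layer_trunc (b + real j * \<delta>) (b + real (Suc j) * \<delta>) s'
                 - layer_trunc (b + real j * \<delta>) (b + real (Suc j) * \<delta>) s)\<^sup>2) \<le> (s' - s)\<^sup>2"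
proof -
  define f where "f j = layer_trunc (b + real j * \<delta>) (b + real (Suc j) * \<delta>) s'
                 - layer_trunc (b + real j * \<delta>) (b + real (Suc j) * \<delta>) s" for j
  have slab: "b + real j * \<delta> \<le> b + real (Suc j) * \<delta>" for j
    using assms by (simp add: algebra_simps)
  have "(\<Sum>j<n. (f j)\<^sup>2) = (\<Sum>j<n. \<bar>f j\<bar>\<^sup>2)" by simp
  also have "\<dots> \<le> (\<Sum>j<n. \<bar>f j\<bar>)\<^sup>2" by (rule sum_power2_le_power2_sum) simp
  also have "(\<Sum>j<n. \<bar>f j\<bar>) = \<bar>\<Sum>j<n. f j\<bar>"
  proof (cases "s \<le> s'")
    case True
    then have "\<And>j. f j \<ge> 0" unfolding f_def using layer_trunc_mono[OF slab] by simp
    then show ?thesis by (simp add: sum_nonneg)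
  next
    case False
    then have "\<And>j. f j \<le> 0" unfolding f_def using layer_trunc_mono[OF slab] by simp
    then show ?thesis by (simp add: sum_nonpos sum_negf[symmetric])
  qed
  also have "(\<Sum>j<n. f j) = layer_trunc b (b + real n * \<delta>) s' - layer_trunc b (b + real n * \<delta>) s"
    unfolding f_def sum_subtractf sum_layer_trunc[OF assms] ..
  also have "\<bar>\<dots>\<bar>\<^sup>2 \<le> (s' - s)\<^sup>2"
    using layer_trunc_lipschitz[of b "b + real n * \<delta>" s' s] assms
    by (metis abs_ge_zero le_add_same_cancel1 mult_nonneg_nonneg of_nat_0_le_iff power2_abs power_mono)
  finally show ?thesis unfolding f_def .
qed

lemma sum_power2_layer_trunc_abs_quotient_le:
  assumes "\<delta> \<ge> 0"
  shows "(\<Sum>j<n. ((layer_trunc (b + real j * \<delta>) (b + real (Suc j) * \<delta>) \<bar>s'\<bar>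
                 - layer_trunc (b + real j * \<delta>) (b + real (Suc j) * \<delta>) \<bar>s\<bar>) / h)\<^sup>2) \<le> ((s' - s) / h)\<^sup>2"
proof -
  have "(\<bar>s'\<bar> - \<bar>s\<bar>)\<^sup>2 \<le> (s' - s)\<^sup>2"
    by (metis abs_ge_zero abs_triangle_ineq3 power2_abs power_mono)
  with sum_power2_layer_trunc_diff_le[OF assms, where n = n and b = b and s' = "\<bar>s'\<bar>" and s = "\<bar>s\<bar>"] show ?thesis
    by (simp add: power_divide sum_divide_distrib[symmetric] divide_right_mono)
qed

lemma card_superlevel_subset_le_infsum:
  fixes u :: "'a \<Rightarrow> real"
  assumes summable: "(\<lambda>z. (u z)\<^sup>2 * w) summable_on UNIV" and "w > 0" "b > 0"
    and F: "finite F" "F \<subseteq> {z. b < \<bar>u z\<bar>}"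
  shows "b\<^sup>2 * real (card F) * w \<le> (\<Sum>\<^sub>\<infinity>z. (u z)\<^sup>2 * w)"
proof -
  have "b\<^sup>2 * real (card F) * w = (\<Sum>z\<in>F. b\<^sup>2 * w)" by simp
  also have "\<dots> \<le> (\<Sum>z\<in>F. (u z)\<^sup>2 * w)"
  proof (rule sum_mono)
    fix z assume "z \<in> F"
    then have "b\<^sup>2 \<le> \<bar>u z\<bar>\<^sup>2" using F \<open>b > 0\<close> by (intro power_mono) auto
    then show "b\<^sup>2 * w \<le> (u z)\<^sup>2 * w" using \<open>w > 0\<close> by simp
  qed
  also have "\<dots> \<le> (\<Sum>\<^sub>\<infinity>z. (u z)\<^sup>2 * w)"
    by (rule finite_sum_le_infsum[OF summable F(1)]) (use \<open>w > 0\<close> in auto)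
  finally show ?thesis .
qed

lemma finite_superlevel_of_summable:
  fixes u :: "'a \<Rightarrow> real"
  assumes summable: "(\<lambda>z. (u z)\<^sup>2 * w) summable_on UNIV" and "w > 0" "b > 0"
  shows "finite {z. b < \<bar>u z\<bar>}"
proof (rule ccontr)
  assume "infinite {z. b < \<bar>u z\<bar>}"
  define M where "M = (\<Sum>\<^sub>\<infinity>z. (u z)\<^sup>2 * w)"
  obtain n :: nat where n: "real n > M / (b\<^sup>2 * w)" using reals_Archimedean2 by blast
  obtain F where F: "F \<subseteq> {z. b < \<bar>u z\<bar>}" "finite F" "card F = n"
    using infinite_arbitrarily_large[OF \<open>infinite _\<close>] by blast
  have "b\<^sup>2 * real n * w \<le> M"
    using card_superlevel_subset_le_infsum[OF assms F(2,1)] F(3) by (simp add: M_def)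
  moreover have "M < real n * (b\<^sup>2 * w)" using n assms by (simp add: field_simps)
  ultimately show False by (simp add: algebra_simps)
qed

lemma card_superlevel_le_infsum:
  fixes u :: "'a \<Rightarrow> real"
  assumes "(\<lambda>z. (u z)\<^sup>2 * w) summable_on UNIV" and "w > 0" "b > 0"
  shows "b\<^sup>2 * real (card {z. b < \<bar>u z\<bar>}) * w \<le> (\<Sum>\<^sub>\<infinity>z. (u z)\<^sup>2 * w)"
  by (rule card_superlevel_subset_le_infsum[OF assms finite_superlevel_of_summable[OF assms]]) simp

lemma finite_subset_int_rectangle:
  fixes S :: "(int \<times> int) set"
  assumes "finite S"
  obtains a0 a1 b0 b1 where "S \<subseteq> {a0..<a1} \<times> {b0..<b1}"
proof -
  define m where "m = Max (insert 0 ((\<lambda>z. max \<bar>fst z\<bar> \<bar>snd z\<bar>) ` S))"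
  have "max \<bar>fst z\<bar> \<bar>snd z\<bar> \<le> m" if "z \<in> S" for z
    unfolding m_def using assms that by (intro Max_ge) auto
  then have "S \<subseteq> {-m..<m + 1} \<times> {-m..<m + 1}" by fastforce
  then show ?thesis by (rule that)
qed

lemma C_S2_ge_100: "C_S2 \<ge> 100"
proof -
  have "2 * 2 * 256 \<le> 2 * pi * (exp 1 + 256)"
    using pi_ge_two by (intro mult_mono) auto
  then have "sqrt 156.25 \<le> sqrt (2 * pi * (exp 1 + 256))" by (intro real_sqrt_le_mono) simp
  moreover have "sqrt 156.25 = (12.5::real)" by (rule real_sqrt_unique) (simp_all add: power2_eq_square)
  ultimately show ?thesis unfolding C_S2_def by linarith
qed

lemma A_exp_nonneg: "A_exp x \<ge> 0"
  by (simp add: A_exp_def)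

lemma A_exp_le_power2_mult_exp: "A_exp x \<le> x\<^sup>2 * exp (x\<^sup>2)"
proof -
  have "(1 - x\<^sup>2) * exp (x\<^sup>2) \<le> exp (- (x\<^sup>2)) * exp (x\<^sup>2)"
    using exp_ge_add_one_self[of "- (x\<^sup>2)"] by (intro mult_right_mono) auto
  also have "\<dots> = 1" by (simp add: exp_minus field_simps)
  finally show ?thesis by (simp add: A_exp_def algebra_simps)
qed

lemma exp_half_le_2: "exp (1 / 2 :: real) \<le> 2"
proof -
  have "exp (1 / 2 :: real) ^ 2 = exp 1" by (simp add: exp_of_nat_mult[symmetric])
  also have "\<dots> \<le> 2\<^sup>2" using exp_le by simp
  finally show ?thesis by (rule power2_le_imp_le) simp
qed

lemma exp_level_le_two_power:
  fixes C :: real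
  assumes "C \<ge> 100"
  shows "exp (16 * (real j + 2)\<^sup>2 / C\<^sup>2) \<le> 2 * 2 ^ (j\<^sup>2)"
proof -
  have C2: "C\<^sup>2 \<ge> 10000" using power_mono[OF assms, of 2] by simp
  have "2 * real j \<le> 1 + (real j)\<^sup>2"
    using sum_squares_ge_zero[of "real j - 1" 0] by (simp add: power2_eq_square algebra_simps)
  moreover have "16 * (real j + 2)\<^sup>2 = 16 * (real j)\<^sup>2 + 64 * real j + 64"
    by (simp add: power2_eq_square algebra_simps)
  ultimately have "16 * (real j + 2)\<^sup>2 \<le> 5000 + 5000 * (real j)\<^sup>2"
    using zero_le_power2[of "real j"] by linarith
  also have "\<dots> = 10000 * ((1 + (real j)\<^sup>2) / 2)" by simp
  also have "\<dots> \<le> C\<^sup>2 * ((1 + (real j)\<^sup>2) / 2)" using C2 by (intro mult_right_mono) auto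
  finally have "16 * (real j + 2)\<^sup>2 / C\<^sup>2 \<le> (1 + (real j)\<^sup>2) / 2"
    using C2 by (simp add: divide_le_eq mult.commute)
  then have "exp (16 * (real j + 2)\<^sup>2 / C\<^sup>2) \<le> exp ((1 + (real j)\<^sup>2) / 2)" by simp
  also have "\<dots> = exp (1 / 2) ^ (1 + j\<^sup>2)"
    by (subst exp_of_nat_mult[symmetric]) (simp add: field_simps)
  also have "\<dots> \<le> 2 ^ (1 + j\<^sup>2)" by (intro power_mono exp_half_le_2) simp
  finally show ?thesis by simp
qed

lemma powr_le_A_exp:
  fixes y p :: real
  assumes p: "p \<ge> 2" and y: "y \<ge> 0"
  shows "(y / (2 * p)) powr p \<le> A_exp y"
proof -
  have y_le: "y\<^sup>2 + 1 \<le> exp (y\<^sup>2)" using exp_ge_add_one_self[of "y\<^sup>2"] by linarith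
  have "y * 1 \<le> y * (2 * p)" using p y by (intro mult_left_mono) auto
  then have "y / (2 * p) \<le> y" using p by (simp add: divide_le_eq)
  then have shrink: "(y / (2 * p)) powr p \<le> y powr p" using p y by (simp add: powr_mono2)
  consider "y \<le> 1" | "1 < y" "y \<le> 2 * p" | "2 * p < y" by linarith
  then show ?thesis
  proof cases
    case 1
    have "y powr p \<le> y powr 2" by (rule powr_mono') (use p y 1 in auto)
    then show ?thesis using shrink y_le y by (simp add: A_exp_def)
  next
    case 2
    have "(y / (2 * p)) powr p \<le> 1" by (rule powr_le1) (use p y 2 in \<open>auto simp: divide_le_eq\<close>)
    moreover have "1 \<le> y\<^sup>2" using one_le_power[of y 2] 2 by simp
    ultimately show ?thesis using y_le by (simp add: A_exp_def)
  next
    case 3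
    then have "y > 0" "0 \<le> ln y" using p by simp_all
    have "y powr p = exp (p * ln y)" using \<open>y > 0\<close> by (simp add: powr_def)
    also have "\<dots> \<le> exp (y\<^sup>2 / 2)"
    proof -
      have "p * ln y \<le> (y / 2) * ln y" using 3 \<open>0 \<le> ln y\<close> by (intro mult_right_mono) auto
      also have "\<dots> \<le> (y / 2) * y" using ln_le_minus_one[OF \<open>y > 0\<close>] \<open>y > 0\<close> by (intro mult_left_mono) auto
      finally show ?thesis by (simp add: power2_eq_square)
    qed
    also have "\<dots> \<le> A_exp y"
    proof -
      define t where "t = exp (y\<^sup>2 / 2)"
      have "4 * 4 \<le> y * y" using 3 p by (intro mult_mono) auto
      then have "1 \<le> y\<^sup>2 / 2" by (simp add: power2_eq_square)
      then have "2 \<le> t" using exp_ge_add_one_self[of "y\<^sup>2 / 2"] unfolding t_def by linarith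
      then have "2 * t \<le> t * t" by (intro mult_right_mono) auto
      moreover have "t * t = exp (y\<^sup>2)" by (simp add: t_def exp_add[symmetric])
      ultimately show ?thesis using \<open>2 \<le> t\<close> unfolding A_exp_def t_def[symmetric] by linarith
    qed
    finally show ?thesis using shrink by simp
  qed
qed

lemma mono_le_sum_levels:
  fixes L :: "nat \<Rightarrow> real" and g :: "real \<Rightarrow> real"
  assumes mono: "mono g" and nonneg: "\<And>x. g x \<ge> 0"
  shows "L 0 < s \<Longrightarrow> s \<le> L M \<Longrightarrow> g s \<le> (\<Sum>j<M. if L j < s then g (L (Suc j)) else 0)"
proof (induction M)
  case (Suc M)
  show ?case
  proof (cases "s \<le> L M")
    case True
    then show ?thesis using Suc nonneg by (simp add: add_increasing2)
  next
    case False
    then have "g s \<le> (if L M < s then g (L (Suc M)) else 0)" using mono Suc.prems by (simp add: monoD)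
    then show ?thesis using nonneg by (simp add: add_increasing sum_nonneg)
  qed
qed simp

lemma sum_mono_le_sum_card_superlevels:
  fixes L :: "nat \<Rightarrow> real" and g :: "real \<Rightarrow> real" and v :: "'a \<Rightarrow> real"
  assumes fin: "finite {z. L 0 < v z}" and mono: "mono g" and nonneg: "\<And>x. g x \<ge> 0"
    and L_ge: "\<And>j. L 0 \<le> L j" and top: "\<And>z. v z \<le> L M"
  shows "(\<Sum>z | L 0 < v z. g (v z)) \<le> (\<Sum>j<M. g (L (Suc j)) * real (card {z. L j < v z}))"
proof -
  have "(\<Sum>z | L 0 < v z. g (v z)) \<le> (\<Sum>z | L 0 < v z. \<Sum>j<M. if L j < v z then g (L (Suc j)) else 0)"
    by (intro sum_mono mono_le_sum_levels[OF mono nonneg]) (simp_all add: top)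
  also have "\<dots> = (\<Sum>j<M. \<Sum>z | L 0 < v z. if L j < v z then g (L (Suc j)) else 0)"
    by (rule sum.swap)
  also have "\<dots> = (\<Sum>j<M. g (L (Suc j)) * real (card {z. L j < v z}))"
  proof (rule sum.cong)
    fix j
    have "{z \<in> {z. L 0 < v z}. L j < v z} = {z. L j < v z}" using L_ge[of j] by auto
    then show "(\<Sum>z | L 0 < v z. if L j < v z then g (L (Suc j)) else 0)
        = g (L (Suc j)) * real (card {z. L j < v z})"
      using sum.inter_filter[OF fin, of "\<lambda>_. g (L (Suc j))" "\<lambda>z. L j < v z"]
      by (simp add: mult.commute)
  qed simp
  finally show ?thesis .
qed

locale grid_W12 =
  fixes h1 h2 :: real and u :: gridfun
  assumes h1_pos: "h1 > 0" and h2_pos: "h2 > 0" and in_W12: "in_W12 h1 h2 u"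
begin

lemma cell_pos: "h1 * h2 > 0"
  using h1_pos h2_pos by simp

lemma summable_power2:
  "(\<lambda>z. (u z)\<^sup>2 * (h1 * h2)) summable_on UNIV"
  "(\<lambda>z. (D1p h1 u z)\<^sup>2 * (h1 * h2)) summable_on UNIV"
  "(\<lambda>z. (D2p h2 u z)\<^sup>2 * (h1 * h2)) summable_on UNIV"
  using in_W12 by (simp_all add: in_W12_def)

definition L2_energy :: real where
  "L2_energy = (\<Sum>\<^sub>\<infinity>z. (u z)\<^sup>2 * (h1 * h2))"

definition grad_energy :: real where
  "grad_energy = (\<Sum>\<^sub>\<infinity>z. (D1p h1 u z)\<^sup>2 * (h1 * h2)) + (\<Sum>\<^sub>\<infinity>z. (D2p h2 u z)\<^sup>2 * (h1 * h2))"

definition trunc_energy :: "(int \<times> int) set \<Rightarrow> real \<Rightarrow> real \<Rightarrow> real" where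
  "trunc_energy R b c = (\<Sum>z\<in>R. ((D1p h1 (\<lambda>z. layer_trunc b c \<bar>u z\<bar>) z)\<^sup>2
        + (D2p h2 (\<lambda>z. layer_trunc b c \<bar>u z\<bar>) z)\<^sup>2) * (h1 * h2))"

lemma L2_energy_nonneg: "L2_energy \<ge> 0"
  unfolding L2_energy_def using cell_pos by (intro infsum_nonneg) auto

lemma grad_energy_nonneg: "grad_energy \<ge> 0"
  unfolding grad_energy_def using cell_pos by (intro add_nonneg_nonneg infsum_nonneg) auto

lemma trunc_energy_nonneg: "trunc_energy R b c \<ge> 0"
  unfolding trunc_energy_def using cell_pos by (intro sum_nonneg) simp

lemma W12_norm_eq: "W12_norm h1 h2 u = sqrt (L2_energy + grad_energy)"
  by (simp add: W12_norm_def L2_energy_def grad_energy_def add.assoc)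

lemma finite_superlevel: "b > 0 \<Longrightarrow> finite {z. b < \<bar>u z\<bar>}"
  using finite_superlevel_of_summable[OF summable_power2(1) cell_pos] .

text \<open>The truncation of |u| to the slab between b and c is supported in the level set at b
  and equals its full height c - b on the level set at c.\<close>
lemma card_superlevel_layer_le:
  assumes b: "0 < b" "b \<le> c"
    and R: "R = {a0..<a1} \<times> {b0..<b1}" and sub: "{z. b < \<bar>u z\<bar>} \<subseteq> R"
  shows "(c - b)\<^sup>2 * real (card {z. c < \<bar>u z\<bar>}) \<le> real (card {z. b < \<bar>u z\<bar>}) * trunc_energy R b c"
proof -
  define E where "E = {z. b < \<bar>u z\<bar>}"
  define T where "T z = layer_trunc b c \<bar>u z\<bar>" for z
  define Q1 where "Q1 = (\<Sum>z\<in>R. (D1p h1 T z)\<^sup>2)"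
  define Q2 where "Q2 = (\<Sum>z\<in>R. (D2p h2 T z)\<^sup>2)"
  define X1 where "X1 = (\<Sum>z\<in>R. \<bar>T (fst z + 1, snd z) - T z\<bar>)"
  define X2 where "X2 = (\<Sum>z\<in>R. \<bar>T (fst z, snd z + 1) - T z\<bar>)"
  have fin: "finite R" "finite E" using R finite_superlevel[OF b(1)] by (simp_all add: E_def)
  have T_supp: "T z \<noteq> 0 \<Longrightarrow> z \<in> E" for z
    using layer_trunc_eq_0[of "\<bar>u z\<bar>" b c] b by (force simp: T_def E_def)
  have "(c - b)\<^sup>2 * real (card {z. c < \<bar>u z\<bar>}) = (\<Sum>z\<in>{z. c < \<bar>u z\<bar>}. (T z)\<^sup>2)"
    by (simp add: T_def layer_trunc_eq_height)
  also have "\<dots> \<le> (\<Sum>z\<in>R. (T z)\<^sup>2)"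
    by (rule sum_mono2[OF fin(1)]) (use b sub in auto)
  also have "\<dots> \<le> X1 * X2" unfolding R X1_def X2_def
    by (rule discrete_gagliardo_nirenberg) (use b T_supp sub in \<open>auto simp: T_def E_def R layer_trunc_nonneg\<close>)
  also have "\<dots> \<le> real (card E) * (Q1 + Q2) * (h1 * h2)"
  proof (rule mult_le_of_power2_bounds)
    have "X1\<^sup>2 \<le> 2 * real (card E) * (\<Sum>z\<in>R. (T (fst z + 1, snd z) - T z)\<^sup>2)" unfolding X1_def
      by (rule sum_abs_shift_diff_power2_le[OF fin, where \<tau> = "\<lambda>z. (fst z - 1, snd z)"]) (use T_supp in auto)
    also have "(\<Sum>z\<in>R. (T (fst z + 1, snd z) - T z)\<^sup>2) = h1\<^sup>2 * Q1"
      using h1_pos by (simp add: Q1_def D1p_def power_divide sum_distrib_left)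
    finally show "X1\<^sup>2 \<le> 2 * real (card E) * (h1\<^sup>2 * Q1)" .
    have "X2\<^sup>2 \<le> 2 * real (card E) * (\<Sum>z\<in>R. (T (fst z, snd z + 1) - T z)\<^sup>2)" unfolding X2_def
      by (rule sum_abs_shift_diff_power2_le[OF fin, where \<tau> = "\<lambda>z. (fst z, snd z - 1)"]) (use T_supp in auto)
    also have "(\<Sum>z\<in>R. (T (fst z, snd z + 1) - T z)\<^sup>2) = h2\<^sup>2 * Q2"
      using h2_pos by (simp add: Q2_def D2p_def power_divide sum_distrib_left)
    finally show "X2\<^sup>2 \<le> 2 * real (card E) * (h2\<^sup>2 * Q2)" .
  qed (use h1_pos h2_pos in \<open>auto simp: X1_def X2_def Q1_def Q2_def sum_nonneg\<close>)
  also have "\<dots> = real (card E) * trunc_energy R b c"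
    by (simp add: trunc_energy_def Q1_def Q2_def T_def[abs_def] sum.distrib sum_distrib_right distrib_right)
  finally show ?thesis by (simp add: E_def)
qed

lemma sum_trunc_energy_layers_le:
  assumes "\<delta> \<ge> 0" and "finite R"
  shows "(\<Sum>j<n. trunc_energy R (b + real j * \<delta>) (b + real (Suc j) * \<delta>)) \<le> grad_energy"
proof -
  let ?T = "\<lambda>j z. layer_trunc (b + real j * \<delta>) (b + real (Suc j) * \<delta>) \<bar>u z\<bar>"
  have "(\<Sum>j<n. trunc_energy R (b + real j * \<delta>) (b + real (Suc j) * \<delta>))
     = (\<Sum>z\<in>R. ((\<Sum>j<n. (D1p h1 (?T j) z)\<^sup>2) + (\<Sum>j<n. (D2p h2 (?T j) z)\<^sup>2)) * (h1 * h2))"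
    unfolding trunc_energy_def
    by (subst sum.swap) (simp add: sum.distrib sum_distrib_right distrib_right)
  also have "\<dots> \<le> (\<Sum>z\<in>R. ((D1p h1 u z)\<^sup>2 + (D2p h2 u z)\<^sup>2) * (h1 * h2))"
    unfolding D1p_def D2p_def
    by (intro sum_mono mult_right_mono add_mono sum_power2_layer_trunc_abs_quotient_le assms)
      (use cell_pos in simp)
  also have "\<dots> = (\<Sum>z\<in>R. (D1p h1 u z)\<^sup>2 * (h1 * h2)) + (\<Sum>z\<in>R. (D2p h2 u z)\<^sup>2 * (h1 * h2))"
    by (simp add: sum.distrib distrib_right)
  also have "\<dots> \<le> grad_energy" unfolding grad_energy_def
    by (intro add_mono finite_sum_le_infsum summable_power2 assms) (use cell_pos in auto)
  finally show ?thesis .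
qed

lemma card_superlevel_le_prod_trunc_energy:
  assumes b: "b > 0" and \<delta>: "\<delta> \<ge> 0"
    and R: "R = {a0..<a1} \<times> {b0..<b1}" and sub: "{z. b < \<bar>u z\<bar>} \<subseteq> R"
  shows "\<delta> ^ (2 * n) * real (card {z. b + real n * \<delta> < \<bar>u z\<bar>})
     \<le> real (card {z. b < \<bar>u z\<bar>}) * (\<Prod>j<n. trunc_energy R (b + real j * \<delta>) (b + real (Suc j) * \<delta>))"
proof (induction n)
  case (Suc n)
  define c where "c = b + real n * \<delta>"
  have "0 \<le> real n * \<delta>" using \<delta> by simp
  then have c: "c > 0" "b \<le> c" "c + \<delta> = b + real (Suc n) * \<delta>"
    using b by (simp_all add: c_def algebra_simps)
  have "\<delta> ^ (2 * Suc n) * real (card {z. b + real (Suc n) * \<delta> < \<bar>u z\<bar>})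
      = \<delta> ^ (2 * n) * ((c + \<delta> - c)\<^sup>2 * real (card {z. c + \<delta> < \<bar>u z\<bar>}))"
    unfolding c(3)[symmetric] by (simp add: power_add power_mult power2_eq_square)
  also have "\<dots> \<le> \<delta> ^ (2 * n) * (real (card {z. c < \<bar>u z\<bar>}) * trunc_energy R c (c + \<delta>))"
    by (intro mult_left_mono card_superlevel_layer_le[OF c(1) _ R]) (use c \<delta> sub in auto)
  also have "\<dots> \<le> real (card {z. b < \<bar>u z\<bar>}) * (\<Prod>j<n. trunc_energy R (b + real j * \<delta>) (b + real (Suc j) * \<delta>))
                 * trunc_energy R c (c + \<delta>)"
    using mult_right_mono[OF Suc.IH trunc_energy_nonneg] by (simp add: c_def mult.assoc)
  finally show ?case
    unfolding prod.lessThan_Suc c(3)[symmetric] c_def[symmetric] by (simp add: mult.assoc)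
qed simp

lemma card_superlevel_tail_le:
  assumes b: "b > 0" and \<delta>: "\<delta> \<ge> 0" and n: "n \<ge> 1"
  shows "\<delta> ^ (2 * n) * real (card {z. b + real n * \<delta> < \<bar>u z\<bar>})
     \<le> real (card {z. b < \<bar>u z\<bar>}) * (grad_energy / real n) ^ n"
proof -
  obtain a0 a1 b0 b1 where sub: "{z. b < \<bar>u z\<bar>} \<subseteq> {a0..<a1} \<times> {b0..<b1}"
    using finite_subset_int_rectangle[OF finite_superlevel[OF b]] .
  define R where "R = {a0..<a1} \<times> {b0..<b1}"
  define g where "g j = trunc_energy R (b + real j * \<delta>) (b + real (Suc j) * \<delta>)" for j
  have "(\<Prod>j<n. g j) \<le> ((\<Sum>j<n. g j) / real n) ^ n"
    by (rule prod_le_mean_power[OF n]) (simp add: g_def trunc_energy_nonneg)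
  also have "\<dots> \<le> (grad_energy / real n) ^ n"
    using sum_trunc_energy_layers_le[OF \<delta>, where R = R and n = n and b = b] trunc_energy_nonneg
    by (intro power_mono divide_right_mono) (simp_all add: g_def R_def sum_nonneg)
  finally have "(\<Prod>j<n. g j) \<le> (grad_energy / real n) ^ n" .
  with card_superlevel_le_prod_trunc_energy[OF b \<delta> R_def, of n] sub show ?thesis
    unfolding g_def R_def by (meson mult_left_mono of_nat_0_le_iff order_trans)
qed

text \<open>Take j squared layers of width 4 N / j in the tail estimate.\<close>
lemma card_superlevel_gaussian_decay:
  assumes N: "N > 0" and grad: "grad_energy \<le> N\<^sup>2"
  shows "16 ^ (j\<^sup>2) * real (card {z. 4 * N * (real j + 1) < \<bar>u z\<bar>}) \<le> real (card {z. 4 * N < \<bar>u z\<bar>})"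
proof (cases "j = 0")
  case False
  define n where "n = j\<^sup>2"
  define q where "q = N\<^sup>2 / real n"
  have n: "n \<ge> 1" and q: "q > 0" using False N by (simp_all add: n_def q_def)
  have level: "4 * N + real n * (4 * N / real j) = 4 * N * (real j + 1)"
    using False by (simp add: n_def power2_eq_square field_simps)
  have width: "(4 * N / real j) ^ (2 * n) = 16 ^ n * q ^ n"
    using False by (simp add: power_mult q_def n_def power_divide power_mult_distrib field_simps)
  have "(grad_energy / real n) ^ n \<le> q ^ n" unfolding q_def
    using grad grad_energy_nonneg by (intro power_mono divide_right_mono) simp_all
  moreover have "(4 * N / real j) ^ (2 * n) * real (card {z. 4 * N + real n * (4 * N / real j) < \<bar>u z\<bar>})
      \<le> real (card {z. 4 * N < \<bar>u z\<bar>}) * (grad_energy / real n) ^ n"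
    by (rule card_superlevel_tail_le) (use N n in auto)
  ultimately have "16 ^ n * q ^ n * real (card {z. 4 * N * (real j + 1) < \<bar>u z\<bar>})
      \<le> real (card {z. 4 * N < \<bar>u z\<bar>}) * q ^ n"
    unfolding level width by (meson mult_left_mono of_nat_0_le_iff order_trans)
  then have "q ^ n * (16 ^ n * real (card {z. 4 * N * (real j + 1) < \<bar>u z\<bar>}))
      \<le> q ^ n * real (card {z. 4 * N < \<bar>u z\<bar>})"
    by (simp add: algebra_simps)
  then show ?thesis using q by (simp add: n_def)
qed simp

lemma power2_mult_cell_le_L2_energy: "(u z)\<^sup>2 * (h1 * h2) \<le> L2_energy"
proof -
  have "(\<Sum>z\<in>{z}. (u z)\<^sup>2 * (h1 * h2)) \<le> L2_energy" unfolding L2_energy_def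
    by (rule finite_sum_le_infsum[OF summable_power2(1)]) (use cell_pos in auto)
  then show ?thesis by simp
qed

lemma abs_le_sqrt_L2_energy: "\<bar>u z\<bar> \<le> sqrt (L2_energy / (h1 * h2))"
proof -
  have "(u z)\<^sup>2 \<le> L2_energy / (h1 * h2)"
    using power2_mult_cell_le_L2_energy[of z] cell_pos by (simp add: le_divide_eq)
  then show ?thesis using real_sqrt_le_mono by fastforce
qed

context
  fixes N C :: real
  assumes N_pos: "N > 0" and L2_le: "L2_energy \<le> N\<^sup>2" and grad_le: "grad_energy \<le> N\<^sup>2"
    and C_ge: "C \<ge> 100"
begin

lemma C_power2_ge: "C\<^sup>2 \<ge> 10000"
  using power_mono[OF C_ge, of 2] by simp

lemma card_superlevel_4N_le: "real (card {z. 4 * N < \<bar>u z\<bar>}) * (h1 * h2) \<le> 1 / 16"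
proof -
  have "(4 * N)\<^sup>2 * real (card {z. 4 * N < \<bar>u z\<bar>}) * (h1 * h2) \<le> L2_energy"
    unfolding L2_energy_def
    by (rule card_superlevel_le_infsum[OF summable_power2(1) cell_pos]) (use N_pos in simp)
  then have "N\<^sup>2 * (16 * (real (card {z. 4 * N < \<bar>u z\<bar>}) * (h1 * h2))) \<le> N\<^sup>2 * 1"
    using L2_le by (simp add: power_mult_distrib mult_ac)
  then show ?thesis using N_pos by simp
qed

lemma A_exp_le_modular_bound:
  "A_exp (\<bar>u z\<bar> / (C * N)) \<le> (u z)\<^sup>2 / (C * N)\<^sup>2 * exp ((u z)\<^sup>2 / (C * N)\<^sup>2)"
  using A_exp_le_power2_mult_exp[of "\<bar>u z\<bar> / (C * N)"] by (simp add: power_divide)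

lemma summable_modular: "(\<lambda>z. A_exp (\<bar>u z\<bar> / (C * N)) * (h1 * h2)) summable_on UNIV"
proof -
  define K where "K = exp ((sqrt (L2_energy / (h1 * h2)))\<^sup>2 / (C * N)\<^sup>2) / (C * N)\<^sup>2"
  have "A_exp (\<bar>u z\<bar> / (C * N)) * (h1 * h2) \<le> (u z)\<^sup>2 * (h1 * h2) * K" for z
  proof -
    have "(u z)\<^sup>2 \<le> (sqrt (L2_energy / (h1 * h2)))\<^sup>2"
      using abs_le_sqrt_L2_energy[of z] by (metis abs_ge_zero power2_abs power_mono)
    then have "exp ((u z)\<^sup>2 / (C * N)\<^sup>2) \<le> exp ((sqrt (L2_energy / (h1 * h2)))\<^sup>2 / (C * N)\<^sup>2)"
      by (simp add: divide_right_mono)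
    then have "(u z)\<^sup>2 / (C * N)\<^sup>2 * exp ((u z)\<^sup>2 / (C * N)\<^sup>2)
        \<le> (u z)\<^sup>2 / (C * N)\<^sup>2 * exp ((sqrt (L2_energy / (h1 * h2)))\<^sup>2 / (C * N)\<^sup>2)"
      by (rule mult_left_mono) simp
    also have "\<dots> = (u z)\<^sup>2 * K" by (simp add: K_def)
    finally have "A_exp (\<bar>u z\<bar> / (C * N)) \<le> (u z)\<^sup>2 * K"
      using A_exp_le_modular_bound[of z] by linarith
    then have "A_exp (\<bar>u z\<bar> / (C * N)) * (h1 * h2) \<le> (u z)\<^sup>2 * K * (h1 * h2)"
      using cell_pos by (intro mult_right_mono) auto
    then show ?thesis by (simp add: mult_ac)
  qed
  note bound = this
  show ?thesis
  proof (rule summable_on_comparison_test)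
    show "(\<lambda>z. (u z)\<^sup>2 * (h1 * h2) * K) summable_on UNIV"
      by (rule summable_on_cmult_left[OF summable_power2(1)])
  qed (use bound A_exp_nonneg cell_pos in simp_all)
qed

text \<open>Below the level 4 N the exponent of A_exp is at most 1/2, so A_exp is at most twice
  its quadratic part there.\<close>
lemma infsum_modular_sublevel_le:
  "infsum (\<lambda>z. A_exp (\<bar>u z\<bar> / (C * N)) * (h1 * h2)) (- {z. 4 * N < \<bar>u z\<bar>}) \<le> 2 / C\<^sup>2"
proof -
  have pointwise: "A_exp (\<bar>u z\<bar> / (C * N)) * (h1 * h2) \<le> (u z)\<^sup>2 * (h1 * h2) * (2 / (C * N)\<^sup>2)"
    if "\<bar>u z\<bar> \<le> 4 * N" for z
  proof -
    have "(u z)\<^sup>2 \<le> (4 * N)\<^sup>2" using that by (metis abs_ge_zero power2_abs power_mono)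
    then have "(u z)\<^sup>2 / (C * N)\<^sup>2 \<le> (4 * N)\<^sup>2 / (C * N)\<^sup>2" by (rule divide_right_mono) simp
    also have "(4 * N)\<^sup>2 / (C * N)\<^sup>2 = 16 / C\<^sup>2" using N_pos by (simp add: power_mult_distrib)
    also have "\<dots> \<le> 1 / 2" using C_power2_ge by (simp add: divide_le_eq)
    finally have "exp ((u z)\<^sup>2 / (C * N)\<^sup>2) \<le> exp (1 / 2)" by simp
    then have "exp ((u z)\<^sup>2 / (C * N)\<^sup>2) \<le> 2" using exp_half_le_2 by linarith
    then have "(u z)\<^sup>2 / (C * N)\<^sup>2 * exp ((u z)\<^sup>2 / (C * N)\<^sup>2) \<le> (u z)\<^sup>2 / (C * N)\<^sup>2 * 2"
      by (intro mult_left_mono) simp_all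
    then have "A_exp (\<bar>u z\<bar> / (C * N)) \<le> (u z)\<^sup>2 / (C * N)\<^sup>2 * 2"
      using A_exp_le_modular_bound[of z] by linarith
    then have "A_exp (\<bar>u z\<bar> / (C * N)) * (h1 * h2) \<le> (u z)\<^sup>2 / (C * N)\<^sup>2 * 2 * (h1 * h2)"
      using cell_pos by (intro mult_right_mono) auto
    then show ?thesis by (simp add: field_simps)
  qed
  have "infsum (\<lambda>z. A_exp (\<bar>u z\<bar> / (C * N)) * (h1 * h2)) (- {z. 4 * N < \<bar>u z\<bar>})
      \<le> infsum (\<lambda>z. (u z)\<^sup>2 * (h1 * h2) * (2 / (C * N)\<^sup>2)) (- {z. 4 * N < \<bar>u z\<bar>})"
    by (rule infsum_mono[OF summable_on_subset[OF summable_modular]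
          summable_on_cmult_left[OF summable_on_subset[OF summable_power2(1)]]])
      (use pointwise in auto)
  also have "\<dots> = infsum (\<lambda>z. (u z)\<^sup>2 * (h1 * h2)) (- {z. 4 * N < \<bar>u z\<bar>}) * (2 / (C * N)\<^sup>2)"
    by (rule infsum_cmult_left')
  also have "\<dots> \<le> N\<^sup>2 * (2 / (C * N)\<^sup>2)"
  proof (rule mult_right_mono)
    have "infsum (\<lambda>z. (u z)\<^sup>2 * (h1 * h2)) (- {z. 4 * N < \<bar>u z\<bar>}) \<le> L2_energy"
      unfolding L2_energy_def
      by (rule infsum_mono2[OF summable_on_subset[OF summable_power2(1)] summable_power2(1)])
        (use cell_pos in auto)
    then show "infsum (\<lambda>z. (u z)\<^sup>2 * (h1 * h2)) (- {z. 4 * N < \<bar>u z\<bar>}) \<le> N\<^sup>2"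
      using L2_le by linarith
  qed simp
  also have "\<dots> = 2 / C\<^sup>2" using N_pos by (simp add: power_mult_distrib)
  finally show ?thesis .
qed

lemma exp_level_mult_card_le:
  "exp ((4 * N * (real j + 2))\<^sup>2 / (C * N)\<^sup>2) * real (card {z. 4 * N * (real j + 1) < \<bar>u z\<bar>})
     \<le> 2 * real (card {z. 4 * N < \<bar>u z\<bar>}) * (1 / 8) ^ j"
proof -
  define m where "m = real (card {z. 4 * N * (real j + 1) < \<bar>u z\<bar>})"
  have "exp ((4 * N * (real j + 2))\<^sup>2 / (C * N)\<^sup>2) = exp (16 * (real j + 2)\<^sup>2 / C\<^sup>2)"
    using N_pos by (simp add: power_mult_distrib)
  also have "\<dots> \<le> 2 * 2 ^ (j\<^sup>2)" by (rule exp_level_le_two_power[OF C_ge])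
  finally have "exp ((4 * N * (real j + 2))\<^sup>2 / (C * N)\<^sup>2) * (16 ^ (j\<^sup>2) * m) \<le> 2 * 2 ^ (j\<^sup>2) * (16 ^ (j\<^sup>2) * m)"
    by (rule mult_right_mono) (simp add: m_def)
  also have "\<dots> \<le> 2 * 2 ^ (j\<^sup>2) * real (card {z. 4 * N < \<bar>u z\<bar>})"
    unfolding m_def by (intro mult_left_mono card_superlevel_gaussian_decay N_pos grad_le) simp
  finally have "exp ((4 * N * (real j + 2))\<^sup>2 / (C * N)\<^sup>2) * m
      \<le> 2 * real (card {z. 4 * N < \<bar>u z\<bar>}) * (2 ^ (j\<^sup>2) / 16 ^ (j\<^sup>2))"
    by (simp add: field_simps)
  also have "(2::real) ^ (j\<^sup>2) / 16 ^ (j\<^sup>2) = (1 / 8) ^ (j\<^sup>2)" by (simp add: power_divide[symmetric])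
  also have "(1 / 8 :: real) ^ (j\<^sup>2) \<le> (1 / 8) ^ j"
    by (rule power_decreasing) (simp_all add: power2_eq_square)
  finally show ?thesis unfolding m_def by (simp add: mult_left_mono)
qed

lemma sum_modular_superlevel_le:
  "(\<Sum>z | 4 * N < \<bar>u z\<bar>. A_exp (\<bar>u z\<bar> / (C * N)) * (h1 * h2)) \<le> 1 / 7"
proof -
  define g where "g s = exp ((max s 0)\<^sup>2 / (C * N)\<^sup>2)" for s
  define L where "L j = 4 * N * (real j + 1)" for j
  define M where "M = nat \<lceil>sqrt (L2_energy / (h1 * h2)) / (4 * N)\<rceil>"
  have g_mono: "mono g"
    unfolding g_def by (intro monoI) (simp add: divide_right_mono power_mono)
  have top: "\<bar>u z\<bar> \<le> L M" for z
  proof -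
    have "sqrt (L2_energy / (h1 * h2)) / (4 * N) \<le> real M" unfolding M_def by (rule real_nat_ceiling_ge)
    then show ?thesis
      using abs_le_sqrt_L2_energy[of z] N_pos by (simp add: L_def divide_le_eq algebra_simps)
  qed
  have level_0: "{z. L 0 < \<bar>u z\<bar>} = {z. 4 * N < \<bar>u z\<bar>}" by (simp add: L_def)
  have "(\<Sum>z | 4 * N < \<bar>u z\<bar>. A_exp (\<bar>u z\<bar> / (C * N)) * (h1 * h2))
      \<le> (\<Sum>z | L 0 < \<bar>u z\<bar>. g \<bar>u z\<bar>) * (h1 * h2)"
    unfolding sum_distrib_right level_0 using cell_pos
    by (intro sum_mono mult_right_mono) (simp_all add: A_exp_def g_def power_divide)
  also have "\<dots> \<le> (\<Sum>j<M. g (L (Suc j)) * real (card {z. L j < \<bar>u z\<bar>})) * (h1 * h2)"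
    using cell_pos N_pos finite_superlevel[of "L 0"]
    by (intro mult_right_mono sum_mono_le_sum_card_superlevels g_mono top)
      (simp_all add: g_def L_def)
  also have "\<dots> \<le> (\<Sum>j<M. 2 * real (card {z. 4 * N < \<bar>u z\<bar>}) * (1 / 8) ^ j) * (h1 * h2)"
    using exp_level_mult_card_le cell_pos N_pos
    by (intro mult_right_mono sum_mono) (simp_all add: g_def L_def algebra_simps)
  also have "\<dots> = 2 * (real (card {z. 4 * N < \<bar>u z\<bar>}) * (h1 * h2)) * (\<Sum>j<M. (1 / 8 :: real) ^ j)"
    by (simp add: sum_distrib_left sum_distrib_right mult_ac)
  also have "\<dots> \<le> 2 * (1 / 16) * (8 / 7)"
  proof (intro mult_mono)
    have "(\<Sum>j<M. (1 / 8 :: real) ^ j) < 1 / (1 - 1 / 8)" by (rule geometric_sum_less) auto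
    then show "(\<Sum>j<M. (1 / 8 :: real) ^ j) \<le> 8 / 7" by simp
  qed (use card_superlevel_4N_le cell_pos in \<open>auto simp: sum_nonneg\<close>)
  finally show ?thesis by simp
qed

lemma modular_le_one:
  "(\<Sum>\<^sub>\<infinity>z. A_exp (\<bar>u z\<bar> / (C * N)) * (h1 * h2)) \<le> 1"
proof -
  let ?f = "\<lambda>z. A_exp (\<bar>u z\<bar> / (C * N)) * (h1 * h2)"
  let ?E = "{z. 4 * N < \<bar>u z\<bar>}"
  have "infsum ?f UNIV = infsum ?f ?E + infsum ?f (- ?E)"
    using infsum_Un_disjoint[of ?f ?E "- ?E"] summable_on_subset[OF summable_modular] by auto
  also have "infsum ?f ?E = sum ?f ?E" using finite_superlevel[of "4 * N"] N_pos by simp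
  moreover have "2 / C\<^sup>2 \<le> 6 / 7" using C_power2_ge by (simp add: divide_le_eq)
  ultimately show ?thesis
    using sum_modular_superlevel_le infsum_modular_sublevel_le by linarith
qed

end

lemma W12_norm_pos:
  assumes "u \<noteq> (\<lambda>_. 0)"
  shows "W12_norm h1 h2 u > 0"
proof -
  obtain z where "u z \<noteq> 0" using assms by (auto simp: fun_eq_iff)
  then have "(u z)\<^sup>2 * (h1 * h2) > 0" using cell_pos by simp
  then have "L2_energy > 0" using power2_mult_cell_le_L2_energy[of z] by linarith
  then show ?thesis using grad_energy_nonneg by (simp add: W12_norm_eq)
qed

lemma modular_W12_le_one:
  assumes "u \<noteq> (\<lambda>_. 0)"
  shows "(\<lambda>z. A_exp (\<bar>u z\<bar> / (C_S2 * W12_norm h1 h2 u)) * (h1 * h2)) summable_on UNIV"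
    and "(\<Sum>\<^sub>\<infinity>z. A_exp (\<bar>u z\<bar> / (C_S2 * W12_norm h1 h2 u)) * (h1 * h2)) \<le> 1"
proof -
  have "(W12_norm h1 h2 u)\<^sup>2 = L2_energy + grad_energy"
    using L2_energy_nonneg grad_energy_nonneg by (simp add: W12_norm_eq)
  then have "L2_energy \<le> (W12_norm h1 h2 u)\<^sup>2" "grad_energy \<le> (W12_norm h1 h2 u)\<^sup>2"
    using L2_energy_nonneg grad_energy_nonneg by linarith+
  note bounds = W12_norm_pos[OF assms] this C_S2_ge_100
  show "(\<lambda>z. A_exp (\<bar>u z\<bar> / (C_S2 * W12_norm h1 h2 u)) * (h1 * h2)) summable_on UNIV"
    by (rule summable_modular[OF bounds])
  show "(\<Sum>\<^sub>\<infinity>z. A_exp (\<bar>u z\<bar> / (C_S2 * W12_norm h1 h2 u)) * (h1 * h2)) \<le> 1"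
    by (rule modular_le_one[OF bounds])
qed

end

lemma orlicz_norm_le:
  fixes A :: "real \<Rightarrow> real"
  assumes "k > 0"
    and "(\<lambda>z. A (\<bar>u z\<bar> / k) * (h1 * h2)) summable_on UNIV"
    and "(\<Sum>\<^sub>\<infinity>z. A (\<bar>u z\<bar> / k) * (h1 * h2)) \<le> 1"
  shows "orlicz_norm A h1 h2 u \<le> k"
  unfolding orlicz_norm_def by (rule cInf_lower) (use assms in \<open>auto intro: bdd_belowI[where m = 0]\<close>)

lemma orlicz_norm_A_exp_zero: "orlicz_norm A_exp h1 h2 (\<lambda>_. 0) = 0"
  unfolding orlicz_norm_def by (simp add: A_exp_def flip: greaterThan_def)

lemma Lp_norm_le_of_modular_le:
  assumes p: "p \<ge> 2" and k: "k > 0" and cell: "h1 * h2 > 0"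
    and summable: "(\<lambda>z. A_exp (\<bar>u z\<bar> / k) * (h1 * h2)) summable_on UNIV"
    and modular: "(\<Sum>\<^sub>\<infinity>z. A_exp (\<bar>u z\<bar> / k) * (h1 * h2)) \<le> 1"
  shows "(\<lambda>z. \<bar>u z\<bar> powr p * (h1 * h2)) summable_on UNIV"
    and "Lp_norm p h1 h2 u \<le> 2 * p * k"
proof -
  define K where "K = (2 * p * k) powr p"
  have K: "K > 0" using k p by (simp add: K_def)
  have bound: "\<bar>u z\<bar> powr p * (h1 * h2) \<le> A_exp (\<bar>u z\<bar> / k) * (h1 * h2) * K" for z
  proof -
    have "\<bar>u z\<bar> = (2 * p * k) * (\<bar>u z\<bar> / k / (2 * p))" using k p by (simp add: field_simps)
    then have "\<bar>u z\<bar> powr p = K * (\<bar>u z\<bar> / k / (2 * p)) powr p"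
      unfolding K_def using k p by (metis abs_ge_zero divide_nonneg_nonneg less_imp_le powr_mult
          mult_nonneg_nonneg zero_le_numeral order_trans[of 0 2 p])
    also have "\<dots> \<le> K * A_exp (\<bar>u z\<bar> / k)"
      using powr_le_A_exp[OF p, of "\<bar>u z\<bar> / k"] k K by (intro mult_left_mono) simp_all
    finally have "\<bar>u z\<bar> powr p * (h1 * h2) \<le> K * A_exp (\<bar>u z\<bar> / k) * (h1 * h2)"
      by (rule mult_right_mono) (use cell in simp)
    then show ?thesis by (simp add: mult_ac)
  qed
  show summable_powr: "(\<lambda>z. \<bar>u z\<bar> powr p * (h1 * h2)) summable_on UNIV"
  proof (rule summable_on_comparison_test)
    show "(\<lambda>z. A_exp (\<bar>u z\<bar> / k) * (h1 * h2) * K) summable_on UNIV"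
      by (rule summable_on_cmult_left[OF summable])
  qed (use bound cell in simp_all)
  have "(\<Sum>\<^sub>\<infinity>z. \<bar>u z\<bar> powr p * (h1 * h2)) \<le> (\<Sum>\<^sub>\<infinity>z. A_exp (\<bar>u z\<bar> / k) * (h1 * h2) * K)"
    by (rule infsum_mono[OF summable_powr summable_on_cmult_left[OF summable]]) (use bound in simp)
  also have "\<dots> = (\<Sum>\<^sub>\<infinity>z. A_exp (\<bar>u z\<bar> / k) * (h1 * h2)) * K" by (rule infsum_cmult_left')
  also have "\<dots> \<le> K" using modular K by (simp add: mult_left_le_one_le)
  finally have "Lp_norm p h1 h2 u \<le> K powr (1 / p)"
    unfolding Lp_norm_def using p cell by (intro powr_mono2 infsum_nonneg) simp_all
  also have "K powr (1 / p) = 2 * p * k" unfolding K_def using p k by (simp add: powr_powr)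
  finally show "Lp_norm p h1 h2 u \<le> 2 * p * k" .
qed

theorem mainTheorem7:
  fixes h1 h2 :: real
  assumes "h1 > 0" and "h2 > 0"
  shows "(\<forall>u. in_W12 h1 h2 u \<longrightarrow>
            orlicz_norm A_exp h1 h2 u \<le> C_S2 * W12_norm h1 h2 u)
       \<and> (\<forall>u. in_W12 h1 h2 u \<and> u \<noteq> (\<lambda>_. 0) \<longrightarrow>
            (\<lambda>z. A_exp (\<bar>u z\<bar> / (C_S2 * W12_norm h1 h2 u)) * (h1 * h2)) summable_on UNIV \<and>
            (\<Sum>\<^sub>\<infinity>z. A_exp (\<bar>u z\<bar> / (C_S2 * W12_norm h1 h2 u)) * (h1 * h2)) \<le> 1)
       \<and> (\<forall>u p. in_W12 h1 h2 u \<and> p \<ge> 2 \<longrightarrow>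
            (\<lambda>z. \<bar>u z\<bar> powr p * (h1 * h2)) summable_on UNIV \<and>
            Lp_norm p h1 h2 u \<le> 2 * C_S2 * p * W12_norm h1 h2 u)"
proof -
  have grid: "grid_W12 h1 h2 u" if "in_W12 h1 h2 u" for u
    using assms that by unfold_locales
  have W12_norm_0: "W12_norm h1 h2 (\<lambda>_. 0) = 0" by (simp add: W12_norm_def D1p_def D2p_def)
  have k_pos: "C_S2 * W12_norm h1 h2 u > 0" if "in_W12 h1 h2 u" "u \<noteq> (\<lambda>_. 0)" for u
    using grid_W12.W12_norm_pos[OF grid that(2)] C_S2_ge_100 that by simp
  note modular = grid_W12.modular_W12_le_one[OF grid]
  have orlicz: "orlicz_norm A_exp h1 h2 u \<le> C_S2 * W12_norm h1 h2 u" if "in_W12 h1 h2 u" for u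
  proof (cases "u = (\<lambda>_. 0)")
    case False
    show ?thesis by (rule orlicz_norm_le[OF k_pos[OF that False] modular[OF that False]])
  qed (simp add: orlicz_norm_A_exp_zero W12_norm_0)
  have Lp: "(\<lambda>z. \<bar>u z\<bar> powr p * (h1 * h2)) summable_on UNIV \<and>
            Lp_norm p h1 h2 u \<le> 2 * C_S2 * p * W12_norm h1 h2 u"
    if "in_W12 h1 h2 u" "p \<ge> 2" for u p
  proof (cases "u = (\<lambda>_. 0)")
    case False
    note Lp = Lp_norm_le_of_modular_le[OF that(2) k_pos[OF that(1) False]
        grid_W12.cell_pos[OF grid[OF that(1)]] modular[OF that(1) False]]
    then show ?thesis by (simp add: mult_ac)
  qed (use that in \<open>simp add: Lp_norm_def W12_norm_0\<close>)
  show ?thesis using orlicz modular Lp by blast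
qed

end
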